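(* Let $n\in\mathbb{N}$ with $n\ge2$, $S:=\{0,\dots,n-1\}$, and let $C\subseteq\operatorname{codes}(S)$ be a fundamental set. Then the map $\mathbf G:(0,\infty)^S\to\mathbb{R}^C$, $\mathbf G(\rho):=(\alpha(x)|_\rho)_{x\in C}$, is injective when restricted to the set $\{\tau\in(0,\infty)^S:\tau(n-1)=1\}$.
   Context: A coronal code over $S$ of length $m$ is a formal string $x=c:p_0p_1\dots p_{m-1}$ with $c,p_i\in S$; $\operatorname{center}(x)=c$, $\operatorname{petals}(x)=\{p_0,\dots,p_{m-1}\}$; codes are identified up to rotation/reversal of the petal string, giving $\operatorname{codes}(S)$. For $a,b,c\in S$ (indeterminates), $c^a_b:=\arccos\!\Big(\frac{(c+a)^2+(c+b)^2-(a+b)^2}{2(c+a)(c+b)}\Big)$, and $\alpha(x):=\sum_{i=0}^{m-1} c^{p_i}_{p_{i+1\bmod m}}$. For $\rho\in(0,\infty)^S$, $\alpha(x)|_\rho$ is the value obtained by substituting $\rho(s)$ for each symbol $s$. A nonempty $C\subseteq\operatorname{codes}(S)$ is fundamental if $\{\operatorname{center}(x):x\in C\}=\{0,\dots,n-2\}$ and for every nonempty $K\subseteq\{0,\dots,n-2\}$ there is $D\subseteq C$ with $\{\operatorname{center}(x):x\in D\}=K$ and $\big(\bigcup_{x\in D}\operatorname{petals}(x)\big)\setminus K\ne\emptyset$. *)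

theory Defs
  imports Complex_Main "HOL-Library.FuncSet"
begin

text \<open>A raw coronal code is a pair (center, petal string), petal string nonempty.
  Coronal codes are the classes of raw codes modulo rotation and reversal of the petal string.\<close>

type_synonym raw_code = "nat \<times> nat list"

definition code_class :: "nat \<Rightarrow> nat list \<Rightarrow> raw_code set" where
  "code_class c ps = {(c, qs) | qs. \<exists>k. qs = rotate k ps \<or> qs = rotate k (rev ps)}"

definition codes :: "nat set \<Rightarrow> raw_code set set" where
  "codes S = {code_class c ps | c ps. c \<in> S \<and> set ps \<subseteq> S \<and> ps \<noteq> []}"

definition rep :: "raw_code set \<Rightarrow> raw_code" where
  "rep X = (SOME x. x \<in> X)"

definition center :: "raw_code set \<Rightarrow> nat" where
  "center X = fst (rep X)"

definition petals :: "raw_code set \<Rightarrow> nat set" where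
  "petals X = set (snd (rep X))"

definition angle :: "(nat \<Rightarrow> real) \<Rightarrow> nat \<Rightarrow> nat \<Rightarrow> nat \<Rightarrow> real" where
  "angle \<rho> c a b = arccos (((\<rho> c + \<rho> a)\<^sup>2 + (\<rho> c + \<rho> b)\<^sup>2 - (\<rho> a + \<rho> b)\<^sup>2)
                            / (2 * (\<rho> c + \<rho> a) * (\<rho> c + \<rho> b)))"

definition alpha_raw :: "raw_code \<Rightarrow> (nat \<Rightarrow> real) \<Rightarrow> real" where
  "alpha_raw x \<rho> = (let c = fst x; ps = snd x; m = length ps in
     (\<Sum>i<m. angle \<rho> c (ps ! i) (ps ! ((i + 1) mod m))))"

definition alpha :: "raw_code set \<Rightarrow> (nat \<Rightarrow> real) \<Rightarrow> real" where
  "alpha X \<rho> = alpha_raw (rep X) \<rho>"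

definition fundamental :: "nat \<Rightarrow> raw_code set set \<Rightarrow> bool" where
  "fundamental n C \<longleftrightarrow> C \<noteq> {} \<and> center ` C = {0..n-2} \<and>
     (\<forall>K. K \<noteq> {} \<and> K \<subseteq> {0..n-2} \<longrightarrow>
        (\<exists>D\<subseteq>C. center ` D = K \<and> (\<Union>x\<in>D. petals x) - K \<noteq> {}))"

definition G :: "raw_code set set \<Rightarrow> (nat \<Rightarrow> real) \<Rightarrow> raw_code set \<Rightarrow> real" where
  "G C \<rho> = (\<lambda>x\<in>C. alpha x \<rho>)"

definition pos_configs :: "nat set \<Rightarrow> (nat \<Rightarrow> real) set" where
  "pos_configs S = {\<rho> \<in> extensional S. \<forall>s\<in>S. \<rho> s > 0}"

end

theory Submission
  imports Defs
begin

text \<open>Compare two configurations \<open>\<rho>, \<tau>\<close> with \<open>\<rho>(n-1) = \<tau>(n-1)\<close> and equal angle sums, and let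
  \<open>K\<close> be the set of symbols where the ratio \<open>\<rho>/\<tau>\<close> attains its maximum \<open>l\<close>. If \<open>l > 1\<close>, then
  \<open>n-1 \<notin> K\<close>, so fundamentality yields a code centred in \<open>K\<close> with a petal outside \<open>K\<close>. The angle
  \<open>c\<^sup>a\<^sub>b\<close> is strictly increasing in the relative radii \<open>a/c\<close> and \<open>b/c\<close>; at a centre of maximal
  ratio all relative radii are weakly smaller under \<open>\<rho>\<close> than under \<open>\<tau>\<close>, and strictly so at the
  escaping petal. Hence the angle sum of that code is strictly smaller under \<open>\<rho>\<close>, a contradiction.
  So \<open>\<rho> \<le> \<tau>\<close>, and by symmetry \<open>\<rho> = \<tau>\<close>.\<close>

lemma rep_in_codes:
  assumes "X \<in> codes S"
  shows "center X \<in> S" and "petals X \<subseteq> S"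
proof -
  obtain c ps where X: "X = code_class c ps" and c: "c \<in> S" and ps: "set ps \<subseteq> S"
    using assms unfolding codes_def by auto
  have "(c, ps) \<in> X" unfolding X code_class_def by (auto intro: exI[of _ 0])
  hence "rep X \<in> X" unfolding rep_def by (rule someI)
  then obtain k qs where "rep X = (c, qs)" "qs = rotate k ps \<or> qs = rotate k (rev ps)"
    unfolding X code_class_def by auto
  thus "center X \<in> S" "petals X \<subseteq> S" using c ps by (auto simp: center_def petals_def)
qed

lemma fundamental_escaping_code:
  assumes "fundamental n C" and "K \<noteq> {}" and "K \<subseteq> {0..n-2}"
  obtains x p where "x \<in> C" "center x \<in> K" "p \<in> petals x" "p \<notin> K"
proof -
  obtain D where "D \<subseteq> C" "center ` D = K" "(\<Union>x\<in>D. petals x) - K \<noteq> {}"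
    using assms unfolding fundamental_def by meson
  thus thesis using that by blast
qed

lemma angle_eq_arccos_radius_ratios:
  assumes "\<rho> c > 0" "\<rho> a > 0" "\<rho> b > 0"
  shows "angle \<rho> c a b = arccos (1 - 2 * (\<rho> a / (\<rho> c + \<rho> a)) * (\<rho> b / (\<rho> c + \<rho> b)))"
proof -
  let ?A = "\<rho> c + \<rho> a" and ?B = "\<rho> c + \<rho> b"
  have "(?A\<^sup>2 + ?B\<^sup>2 - (\<rho> a + \<rho> b)\<^sup>2) / (2 * ?A * ?B)
        = (2 * ?A * ?B - 4 * \<rho> a * \<rho> b) / (2 * ?A * ?B)"
    by (simp add: algebra_simps power2_eq_square)
  also have "\<dots> = 1 - 2 * (\<rho> a / ?A) * (\<rho> b / ?B)"
  proof -
    have quot: "(2 * A * B - 4 * u * v) / (2 * A * B) = 1 - 2 * (u / A) * (v / B)"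
      if "A \<noteq> 0" "B \<noteq> 0" for A B u v :: real
      using that by (simp add: field_simps)
    show ?thesis by (rule quot) (use assms in auto)
  qed
  finally show ?thesis unfolding angle_def by simp
qed

lemma frac_plus_le_iff:
  fixes c a c' a' :: real
  assumes "c > 0" "a > 0" "c' > 0" "a' > 0"
  shows "a / (c + a) \<le> a' / (c' + a') \<longleftrightarrow> a * c' \<le> a' * c"
    and "a / (c + a) < a' / (c' + a') \<longleftrightarrow> a * c' < a' * c"
  using assms by (simp_all add: divide_simps algebra_simps)

lemma angle_mono:
  fixes \<rho> \<tau> :: "nat \<Rightarrow> real"
  assumes pos: "\<rho> c > 0" "\<rho> a > 0" "\<rho> b > 0" "\<tau> c > 0" "\<tau> a > 0" "\<tau> b > 0"
    and ha: "\<rho> a * \<tau> c \<le> \<tau> a * \<rho> c" and hb: "\<rho> b * \<tau> c \<le> \<tau> b * \<rho> c"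
  shows "angle \<rho> c a b \<le> angle \<tau> c a b"
    and "\<rho> a * \<tau> c < \<tau> a * \<rho> c \<Longrightarrow> angle \<rho> c a b < angle \<tau> c a b"
proof -
  define x y x' y' where "x = \<rho> a / (\<rho> c + \<rho> a)" and "y = \<rho> b / (\<rho> c + \<rho> b)"
    and "x' = \<tau> a / (\<tau> c + \<tau> a)" and "y' = \<tau> b / (\<tau> c + \<tau> b)"
  have unit: "0 < x" "x < 1" "0 < y" "y < 1" "0 < x'" "x' < 1" "0 < y'" "y' < 1"
    unfolding x_def y_def x'_def y'_def using pos by (auto simp: divide_simps)
  have xx: "x \<le> x'" and yy: "y \<le> y'"
    unfolding x_def y_def x'_def y'_def using frac_plus_le_iff(1) pos ha hb by auto
  have angles: "angle \<rho> c a b = arccos (1 - 2 * x * y)" "angle \<tau> c a b = arccos (1 - 2 * x' * y')"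
    using angle_eq_arccos_radius_ratios pos unfolding x_def y_def x'_def y'_def by simp_all
  have prods: "0 < x * y" "x' * y' < 1" using unit mult_strict_mono[of x' 1 y' 1] by auto
  have "x * y \<le> x' * y'" using unit xx yy by (intro mult_mono) auto
  thus "angle \<rho> c a b \<le> angle \<tau> c a b" unfolding angles
    using prods by (intro arccos_le_arccos) auto
  assume "\<rho> a * \<tau> c < \<tau> a * \<rho> c"
  hence "x < x'" unfolding x_def x'_def using frac_plus_le_iff(2) pos by auto
  hence "x * y < x' * y" using unit by (intro mult_strict_right_mono)
  also have "\<dots> \<le> x' * y'" using unit yy by (intro mult_left_mono) auto
  finally have "x * y < x' * y'" .
  thus "angle \<rho> c a b < angle \<tau> c a b" unfolding angles
    using prods by (intro arccos_less_arccos) auto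
qed

lemma alpha_raw_strict_mono:
  fixes \<rho> \<tau> :: "nat \<Rightarrow> real"
  assumes pos: "\<And>t. t \<in> insert c (set qs) \<Longrightarrow> \<rho> t > 0 \<and> \<tau> t > 0"
    and le: "\<And>t. t \<in> set qs \<Longrightarrow> \<rho> t * \<tau> c \<le> \<tau> t * \<rho> c"
    and p: "p \<in> set qs" "\<rho> p * \<tau> c < \<tau> p * \<rho> c"
  shows "alpha_raw (c, qs) \<rho> < alpha_raw (c, qs) \<tau>"
proof -
  define m where "m = length qs"
  obtain i where i: "i < m" "qs ! i = p" using p(1) unfolding m_def by (auto simp: in_set_conv_nth)
  have petal: "qs ! j \<in> set qs" "qs ! ((j + 1) mod m) \<in> set qs" if "j < m" for j
  proof -
    have "(j + 1) mod m < m" using that by simp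
    thus "qs ! j \<in> set qs" "qs ! ((j + 1) mod m) \<in> set qs" using that unfolding m_def by simp_all
  qed
  let ?A = "\<lambda>\<sigma> j. angle \<sigma> c (qs ! j) (qs ! ((j + 1) mod m))"
  have "?A \<rho> j \<le> ?A \<tau> j" if "j < m" for j
    using petal[OF that] by (intro angle_mono(1)) (auto simp: pos le)
  moreover have "?A \<rho> i < ?A \<tau> i"
    using petal[OF i(1)] i p by (intro angle_mono(2)) (auto simp: pos le)
  ultimately have "(\<Sum>j<m. ?A \<rho> j) < (\<Sum>j<m. ?A \<tau> j)"
    using i(1) by (intro sum_strict_mono_ex1) auto
  thus ?thesis unfolding alpha_raw_def m_def by (simp add: Let_def)
qed

lemma eq_alpha_on_fundamental_imp_le:
  fixes \<rho> \<tau> :: "nat \<Rightarrow> real"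
  assumes C: "C \<subseteq> codes {0..<n}" and F: "fundamental n C"
    and pos: "\<And>s. s < n \<Longrightarrow> \<rho> s > 0 \<and> \<tau> s > 0"
    and last: "\<rho> (n - 1) = \<tau> (n - 1)"
    and eq: "\<And>x. x \<in> C \<Longrightarrow> alpha x \<rho> = alpha x \<tau>"
    and s: "s < n"
  shows "\<rho> s \<le> \<tau> s"
proof (rule ccontr)
  define f where "f t = \<rho> t / \<tau> t" for t
  define l where "l = Max (f ` {0..<n})"
  define K where "K = {t \<in> {0..<n}. f t = l}"
  have f_le: "f t \<le> l" if "t < n" for t unfolding l_def using that by simp
  have "l \<in> f ` {0..<n}" unfolding l_def using s by (intro Max_in) auto
  hence "K \<noteq> {}" unfolding K_def by auto
  assume "\<not> \<rho> s \<le> \<tau> s"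
  hence "f s > 1" using pos[OF s] unfolding f_def by (simp add: divide_simps)
  hence "l > 1" using f_le[OF s] by simp
  hence "n - 1 \<notin> K" using last pos[of "n - 1"] s unfolding K_def f_def by auto
  have "K \<subseteq> {0..n-2}"
  proof
    fix t assume "t \<in> K"
    with \<open>n - 1 \<notin> K\<close> have "t < n" "t \<noteq> n - 1" unfolding K_def by auto
    thus "t \<in> {0..n-2}" by simp
  qed
  then obtain x p where x: "x \<in> C" "center x \<in> K" "p \<in> petals x" "p \<notin> K"
    using fundamental_escaping_code[OF F \<open>K \<noteq> {}\<close>] by blast
  obtain c qs where rep: "rep x = (c, qs)" by fastforce
  have c: "c < n" "f c = l" using x(2) rep unfolding K_def center_def by auto
  have qs: "set qs \<subseteq> {0..<n}" "p \<in> set qs"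
    using rep_in_codes(2)[of x] x(1,3) C rep unfolding petals_def by auto
  have ratio: "\<rho> t / \<tau> t \<le> \<rho> c / \<tau> c" if "t < n" for t
    using f_le[OF that] c(2) unfolding f_def by simp
  have "alpha_raw (c, qs) \<rho> < alpha_raw (c, qs) \<tau>"
  proof (rule alpha_raw_strict_mono)
    show "\<rho> t * \<tau> c \<le> \<tau> t * \<rho> c" if "t \<in> set qs" for t
      using ratio[of t] pos[of t] pos[OF c(1)] that qs(1) by (auto simp: divide_simps mult.commute)
    have "\<rho> p / \<tau> p < \<rho> c / \<tau> c"
      using ratio[of p] x(4) qs c(2) unfolding K_def f_def by auto
    thus "\<rho> p * \<tau> c < \<tau> p * \<rho> c"
      using pos[of p] pos[OF c(1)] qs by (auto simp: divide_simps mult.commute)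
  qed (use pos c(1) qs in auto)
  thus False using eq[OF x(1)] rep unfolding alpha_def by simp
qed

theorem theorem4p2:
  fixes n :: nat and C :: "raw_code set set"
  assumes "n \<ge> 2"
    and "C \<subseteq> codes {0..<n}"
    and "fundamental n C"
  shows "inj_on (G C) {\<tau> \<in> pos_configs {0..<n}. \<tau> (n - 1) = 1}"
proof (rule inj_onI)
  fix \<rho> \<tau> assume r: "\<rho> \<in> {\<tau> \<in> pos_configs {0..<n}. \<tau> (n - 1) = 1}"
    and t: "\<tau> \<in> {\<tau> \<in> pos_configs {0..<n}. \<tau> (n - 1) = 1}" and g: "G C \<rho> = G C \<tau>"
  have eq: "alpha x \<rho> = alpha x \<tau>" if "x \<in> C" for x
    using fun_cong[OF g, of x] that unfolding G_def by simp
  have pos: "\<And>s. s < n \<Longrightarrow> \<rho> s > 0 \<and> \<tau> s > 0" using r t unfolding pos_configs_def by auto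
  have "\<rho> s = \<tau> s" if "s < n" for s
    using eq_alpha_on_fundamental_imp_le[OF assms(2,3) pos _ eq that]
      eq_alpha_on_fundamental_imp_le[OF assms(2,3) _ _ eq[symmetric] that] pos r t
    by (simp add: conj_commute order_antisym)
  moreover have "\<rho> s = \<tau> s" if "\<not> s < n" for s
    using r t that unfolding pos_configs_def extensional_def by auto
  ultimately show "\<rho> = \<tau>" by (intro ext) blast
qed

end
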